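(* The algorithm SCHEMATIC-ALGO$(G,\mu^*,m^*,\Delta^*,\gamma)$ (described in the context) runs for at most $O(\beta^2\cdot\mu(G))$ rounds.
   Context: Let $G=(V,E)$ be a graph with $n$ vertices, $m$ edges, average degree $d$; $\mu(G)$ is its maximum matching size. Fix a small constant $\epsilon\in(0,1)$ and $\beta:=1/\Theta(\epsilon^3)$. For $H\subseteq E$ and a pair $e=(u,v)$, $\deg_e(H):=\deg_u(H)+\deg_v(H)$. An edge $e$ is underfull w.r.t. $H$ if $\deg_e(H)<(1-\epsilon)\beta$ and overfull w.r.t. $H$ if $\deg_e(H)>\beta$. The parameters satisfy $\mu(G)/(2+\epsilon)\le\mu^*\le n$, $d\le\Delta^*\le n$, $m^*\ge m$, $0<\gamma<1$. SCHEMATIC-ALGO: set $H\leftarrow\emptyset$. Repeat rounds: in each round set Status $\leftarrow$ false; for $i=1,\dots,(100m^*\log n)/(\mu^*(\Delta^* )^\gamma)$, sample an edge $e\in E$ uniformly at random (independently, with repetition); if $e\in E\setminus H$ and $e$ is underfull w.r.t. $H$, then set Status $\leftarrow$ true, $H\leftarrow H\cup\{e\}$, and then while some edge of $H$ is overfull w.r.t. $H$, remove such an edge from $H$. If at the end of a round Status is false, stop the rounds (this is the last round). Then let $U$ be the set of edges of $E\setminus H$ underfull w.r.t. $H$, take any $V_{small}\subseteq V$ with $\{v:\deg_v(U)\le (1-\epsilon)(\Delta^* )^\gamma/\epsilon\}\subseteq V_{small}\subseteq\{v:\deg_v(U)\le(1+\epsilon)(\Delta^* )^\gamma/\epsilon\}$,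 let $E_{small}:=\{(u,v)\in H\cup U: u,v\in V_{small}\}$, and return $\mu(E_{small})$. *)

theory Defs
  imports Complex_Main
begin

definition simple_graph :: "'a set \<Rightarrow> 'a set set \<Rightarrow> bool" where
  "simple_graph V E \<longleftrightarrow> finite V \<and> (\<forall>e\<in>E. \<exists>u v. e = {u, v} \<and> u \<noteq> v \<and> u \<in> V \<and> v \<in> V)"

definition matching :: "'a set set \<Rightarrow> bool" where
  "matching M \<longleftrightarrow> (\<forall>e1\<in>M. \<forall>e2\<in>M. e1 \<noteq> e2 \<longrightarrow> e1 \<inter> e2 = {})"

definition max_matching :: "'a set set \<Rightarrow> nat" where
  "max_matching E = Max {card M | M. M \<subseteq> E \<and> matching M}"

definition avg_degree :: "'a set \<Rightarrow> 'a set set \<Rightarrow> real" where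
  "avg_degree V E = 2 * real (card E) / real (card V)"

definition vdeg :: "'a \<Rightarrow> 'a set set \<Rightarrow> nat" where
  "vdeg v H = card {e \<in> H. v \<in> e}"

definition edeg :: "'a set \<Rightarrow> 'a set set \<Rightarrow> nat" where
  "edeg e H = (\<Sum>v\<in>e. vdeg v H)"

definition underfull :: "real \<Rightarrow> real \<Rightarrow> 'a set set \<Rightarrow> 'a set \<Rightarrow> bool" where
  "underfull \<epsilon> \<beta> H e \<longleftrightarrow> real (edeg e H) < (1 - \<epsilon>) * \<beta>"

definition overfull :: "real \<Rightarrow> 'a set set \<Rightarrow> 'a set \<Rightarrow> bool" where
  "overfull \<beta> H e \<longleftrightarrow> real (edeg e H) > \<beta>"

text \<open>The inner loop "while some edge of H is overfull, remove such an edge"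
  (any choice of the removed edge is allowed).\<close>
inductive fix_overfull :: "real \<Rightarrow> 'a set set \<Rightarrow> 'a set set \<Rightarrow> bool" where
  fix_done: "(\<forall>f\<in>H. \<not> overfull \<beta> H f) \<Longrightarrow> fix_overfull \<beta> H H"
| fix_remove: "f \<in> H \<Longrightarrow> overfull \<beta> H f \<Longrightarrow> fix_overfull \<beta> (H - {f}) H'
            \<Longrightarrow> fix_overfull \<beta> H H'"

text \<open>One iteration of the for-loop with sampled edge \<open>e\<close>; state is (H, Status).\<close>
inductive iter_step :: "real \<Rightarrow> real \<Rightarrow> 'a set set \<Rightarrow> 'a set
                        \<Rightarrow> 'a set set \<times> bool \<Rightarrow> 'a set set \<times> bool \<Rightarrow> bool" where
  it_insert: "e \<in> E - H \<Longrightarrow> underfull \<epsilon> \<beta> H e \<Longrightarrow> fix_overfull \<beta> (insert e H) H'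
            \<Longrightarrow> iter_step \<epsilon> \<beta> E e (H, s) (H', True)"
| it_skip: "\<not> (e \<in> E - H \<and> underfull \<epsilon> \<beta> H e) \<Longrightarrow> iter_step \<epsilon> \<beta> E e (H, s) (H, s)"

inductive run_iters :: "real \<Rightarrow> real \<Rightarrow> 'a set set \<Rightarrow> 'a set list
                        \<Rightarrow> 'a set set \<times> bool \<Rightarrow> 'a set set \<times> bool \<Rightarrow> bool" where
  nil: "run_iters \<epsilon> \<beta> E [] st st"
| cons: "iter_step \<epsilon> \<beta> E e st st' \<Longrightarrow> run_iters \<epsilon> \<beta> E es st' st''
           \<Longrightarrow> run_iters \<epsilon> \<beta> E (e # es) st st''"

text \<open>One round with \<open>K\<close> iterations, samples drawn from \<open>E\<close> (with repetition):
  starting from \<open>H\<close> with Status = false, ending in \<open>H'\<close> with Status = \<open>s\<close>.\<close>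
definition round_exec :: "real \<Rightarrow> real \<Rightarrow> 'a set set \<Rightarrow> nat
                          \<Rightarrow> 'a set set \<Rightarrow> 'a set set \<Rightarrow> bool \<Rightarrow> bool" where
  "round_exec \<epsilon> \<beta> E K H H' s \<longleftrightarrow>
     (\<exists>es. length es = K \<and> set es \<subseteq> E \<and> run_iters \<epsilon> \<beta> E es (H, False) (H', s))"

text \<open>\<open>true_rounds \<epsilon> \<beta> E K k H\<close>: some execution starting from \<open>H = {}\<close> performs
  \<open>k\<close> consecutive rounds, each ending with Status = true, reaching \<open>H\<close>.
  After such \<open>k\<close> rounds the algorithm executes round \<open>k+1\<close>, so it runs at least \<open>k+1\<close> rounds.\<close>
inductive true_rounds :: "real \<Rightarrow> real \<Rightarrow> 'a set set \<Rightarrow> nat \<Rightarrow> nat \<Rightarrow> 'a set set \<Rightarrow> bool" where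
  start: "true_rounds \<epsilon> \<beta> E K 0 {}"
| step: "true_rounds \<epsilon> \<beta> E K k H \<Longrightarrow> round_exec \<epsilon> \<beta> E K H H' True
           \<Longrightarrow> true_rounds \<epsilon> \<beta> E K (Suc k) H'"

definition iters_per_round :: "nat \<Rightarrow> real \<Rightarrow> real \<Rightarrow> real \<Rightarrow> real \<Rightarrow> nat" where
  "iters_per_round n \<mu>s ms \<Delta>s \<gamma> = nat \<lfloor>100 * ms * log 2 (real n) / (\<mu>s * \<Delta>s powr \<gamma>)\<rfloor>"

end

theory Submission
  imports Defs
begin

(*
  Fix the integer threshold b = floor beta and the potential
  Phi(H) = 2 b |H| - sum_v deg_v(H)^2.  Adding an edge e to H changes Phi by
  2b - 2 deg_e(H) - 2, so inserting an underfull edge raises Phi as soon as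
  epsilon beta >= 2, while deleting an overfull edge (deg_e >= b + 1 before the
  deletion) does not lower it.  Hence each round that ends with Status = true
  raises Phi by at least one, and after k such rounds k <= Phi(H) <= 2b|H|.
  Since H has no overfull edge, every vertex has H-degree at most beta; a
  maximal matching M of H meets every edge of H in one of its 2|M| <= 2 mu(G)
  vertices, so |H| <= 2 beta mu(G) and k <= 4 beta^2 mu(G).  Neither the number
  of samples per round nor mu*, m*, Delta*, gamma plays any role.
*)

definition degree_potential :: "'a set \<Rightarrow> nat \<Rightarrow> 'a set set \<Rightarrow> int" where
  "degree_potential V b H = int (2 * b * card H) - (\<Sum>v\<in>V. int (vdeg v H)^2)"

definition degree_bounded_subgraph :: "real \<Rightarrow> 'a set set \<Rightarrow> 'a set set \<Rightarrow> bool" where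
  "degree_bounded_subgraph \<beta> E H \<longleftrightarrow> H \<subseteq> E \<and> (\<forall>f\<in>H. \<not> overfull \<beta> H f)"

lemma simple_graph_finite_edges:
  assumes "simple_graph V E"
  shows "finite E"
proof (rule finite_subset)
  show "E \<subseteq> Pow V" and "finite (Pow V)"
    using assms by (auto simp: simple_graph_def)
qed

lemma simple_graph_edgeD:
  assumes "simple_graph V E" "e \<in> E"
  shows "card e = 2" "e \<subseteq> V"
  using assms by (auto simp: simple_graph_def)

lemma vdeg_insert:
  assumes "finite H" "e \<notin> H"
  shows "vdeg v (insert e H) = vdeg v H + (if v \<in> e then 1 else 0)"
proof -
  have "{x \<in> insert e H. v \<in> x} = (if v \<in> e then insert e {x \<in> H. v \<in> x} else {x \<in> H. v \<in> x})"
    by auto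
  then show ?thesis
    using assms by (simp add: vdeg_def)
qed

lemma edeg_insert_self:
  assumes "finite H" "e \<notin> H"
  shows "edeg e (insert e H) = edeg e H + card e"
  using assms by (simp add: edeg_def vdeg_insert sum_Suc)

lemma vdeg_le_edeg: "finite f \<Longrightarrow> v \<in> f \<Longrightarrow> vdeg v H \<le> edeg f H"
  unfolding edeg_def by (rule member_le_sum) auto

lemma degree_potential_insert:
  assumes "finite V" "finite H" "e \<subseteq> V" "e \<notin> H"
  shows "degree_potential V b (insert e H)
           = degree_potential V b H + 2 * int b - 2 * int (edeg e H) - int (card e)"
proof -
  have "(\<Sum>v\<in>V. int (vdeg v (insert e H))^2)
          = (\<Sum>v\<in>V. int (vdeg v H)^2 + (if v \<in> e then 2 * int (vdeg v H) + 1 else 0))"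
    using assms(2,4) by (intro sum.cong) (auto simp: vdeg_insert power2_eq_square algebra_simps)
  also have "\<dots> = (\<Sum>v\<in>V. int (vdeg v H)^2) + (\<Sum>v\<in>e. 2 * int (vdeg v H) + 1)"
    using assms(1,3) by (simp add: sum.distrib sum.If_cases Int_absorb1)
  also have "(\<Sum>v\<in>e. 2 * int (vdeg v H) + 1) = 2 * int (edeg e H) + int (card e)"
    by (simp add: edeg_def sum.distrib sum_distrib_left)
  finally show ?thesis
    using assms(2,4) by (simp add: degree_potential_def)
qed

lemma degree_potential_le: "degree_potential V b H \<le> int (2 * b * card H)"
  unfolding degree_potential_def by (simp add: sum_nonneg)

lemma degree_potential_remove_overfull:
  assumes "finite V" "finite H" "f \<subseteq> V" "f \<in> H" "card f = 2" "b < edeg f H"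
  shows "degree_potential V b H \<le> degree_potential V b (H - {f})"
proof -
  have H: "H = insert f (H - {f})" and fin: "finite (H - {f})"
    using assms(2,4) by auto
  have "edeg f H = edeg f (H - {f}) + 2"
    using edeg_insert_self[OF fin, of f] assms(5) H by simp
  moreover have "degree_potential V b H
      = degree_potential V b (H - {f}) + 2 * int b - 2 * int (edeg f (H - {f})) - 2"
    using degree_potential_insert[OF assms(1) fin assms(3), of b] assms(5) H by simp
  ultimately show ?thesis
    using assms(6) by linarith
qed

lemma degree_potential_insert_underfull:
  assumes "finite V" "finite H" "e \<subseteq> V" "e \<notin> H" "card e = 2" "edeg e H + 2 \<le> b"
  shows "degree_potential V b H < degree_potential V b (insert e H)"
  using degree_potential_insert[OF assms(1-4), of b] assms(5,6) by linarith

lemma fix_overfull_degree_bounded: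
  "fix_overfull \<beta> H H' \<Longrightarrow> H \<subseteq> E \<Longrightarrow> degree_bounded_subgraph \<beta> E H'"
  unfolding degree_bounded_subgraph_def by (induction rule: fix_overfull.induct) auto

lemma fix_overfull_degree_potential:
  assumes "fix_overfull \<beta> H H'" "real b \<le> \<beta>" "simple_graph V E" "H \<subseteq> E"
  shows "degree_potential V b H \<le> degree_potential V b H'"
  using assms(1,2,4)
proof (induction rule: fix_overfull.induct)
  case (fix_done H \<beta>)
  then show ?case by simp
next
  case (fix_remove f H \<beta> H')
  have "finite V"
    using assms(3) by (simp add: simple_graph_def)
  moreover have "finite H"
    using fix_remove.prems(2) simple_graph_finite_edges[OF assms(3)] finite_subset by blast
  moreover have "card f = 2" "f \<subseteq> V"
    using simple_graph_edgeD[OF assms(3)] fix_remove.hyps(1) fix_remove.prems(2) by auto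
  moreover have "b < edeg f H"
  proof -
    have "real b < real (edeg f H)"
      using fix_remove.hyps(2) fix_remove.prems(1) unfolding overfull_def by linarith
    then show ?thesis by simp
  qed
  ultimately have "degree_potential V b H \<le> degree_potential V b (H - {f})"
    using degree_potential_remove_overfull fix_remove.hyps(1) by blast
  also have "\<dots> \<le> degree_potential V b H'"
    using fix_remove.IH fix_remove.prems by blast
  finally show ?case .
qed

lemma iter_step_degree_bounded:
  assumes "iter_step \<epsilon> \<beta> E e st st'" "degree_bounded_subgraph \<beta> E (fst st)"
  shows "degree_bounded_subgraph \<beta> E (fst st')"
  using assms(1)
proof cases
  case (it_insert H H' s)
  then show ?thesis
    using assms(2) fix_overfull_degree_bounded[of \<beta> "insert e H" H' E]
    by (auto simp: degree_bounded_subgraph_def)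
next
  case (it_skip H s)
  then show ?thesis
    using assms(2) by simp
qed

lemma iter_step_degree_potential:
  assumes "iter_step \<epsilon> \<beta> E e st st'" "simple_graph V E" "fst st \<subseteq> E"
    and "real b \<le> \<beta>" "(1 - \<epsilon>) * \<beta> \<le> real b - 1"
  shows "degree_potential V b (fst st) \<le> degree_potential V b (fst st')
    \<and> (snd st' \<longrightarrow> snd st \<or> degree_potential V b (fst st) < degree_potential V b (fst st'))"
  using assms(1)
proof cases
  case (it_insert H H' s)
  have "finite V"
    using assms(2) by (simp add: simple_graph_def)
  moreover have "finite H"
    using it_insert assms(3) simple_graph_finite_edges[OF assms(2)] finite_subset by auto
  moreover have "card e = 2" "e \<subseteq> V"
    using simple_graph_edgeD[OF assms(2)] it_insert(3) by auto
  moreover have "edeg e H + 2 \<le> b"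
    using it_insert(4) assms(5) by (simp add: underfull_def)
  ultimately have "degree_potential V b H < degree_potential V b (insert e H)"
    using degree_potential_insert_underfull it_insert(3) by blast
  also have "\<dots> \<le> degree_potential V b H'"
    using fix_overfull_degree_potential[OF it_insert(5) assms(4,2)] it_insert(3) assms(3)
      it_insert(1) by auto
  finally show ?thesis
    using it_insert(1,2) by simp
next
  case (it_skip H s)
  then show ?thesis by simp
qed

lemma run_iters_degree_potential:
  assumes "run_iters \<epsilon> \<beta> E es st st'" "degree_bounded_subgraph \<beta> E (fst st)" "simple_graph V E"
    and "real b \<le> \<beta>" "(1 - \<epsilon>) * \<beta> \<le> real b - 1"
  shows "degree_bounded_subgraph \<beta> E (fst st')
    \<and> degree_potential V b (fst st) \<le> degree_potential V b (fst st')
    \<and> (snd st' \<longrightarrow> snd st \<or> degree_potential V b (fst st) < degree_potential V b (fst st'))"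
  using assms
proof (induction rule: run_iters.induct)
  case (nil \<epsilon> \<beta> E st)
  then show ?case by simp
next
  case (cons \<epsilon> \<beta> E e st st' es st'')
  have bounded: "degree_bounded_subgraph \<beta> E (fst st')"
    using iter_step_degree_bounded cons.hyps(1) cons.prems(1) .
  have "degree_potential V b (fst st) \<le> degree_potential V b (fst st')
    \<and> (snd st' \<longrightarrow> snd st \<or> degree_potential V b (fst st) < degree_potential V b (fst st'))"
    using iter_step_degree_potential[OF cons.hyps(1) cons.prems(2) _ cons.prems(3,4)] cons.prems(1)
    by (simp add: degree_bounded_subgraph_def)
  moreover have "degree_bounded_subgraph \<beta> E (fst st'')
    \<and> degree_potential V b (fst st') \<le> degree_potential V b (fst st'')
    \<and> (snd st'' \<longrightarrow> snd st' \<or> degree_potential V b (fst st') < degree_potential V b (fst st''))"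
    using cons.IH[OF bounded cons.prems(2-4)] .
  ultimately show ?case
    by auto
qed

lemma round_exec_degree_potential:
  assumes "round_exec \<epsilon> \<beta> E K H H' True" "degree_bounded_subgraph \<beta> E H" "simple_graph V E"
    and "real b \<le> \<beta>" "(1 - \<epsilon>) * \<beta> \<le> real b - 1"
  shows "degree_bounded_subgraph \<beta> E H' \<and> degree_potential V b H < degree_potential V b H'"
proof -
  obtain es where "run_iters \<epsilon> \<beta> E es (H, False) (H', True)"
    using assms(1) by (auto simp: round_exec_def)
  from run_iters_degree_potential[OF this _ assms(3-5)] assms(2) show ?thesis
    by simp
qed

lemma true_rounds_degree_potential:
  assumes "true_rounds \<epsilon> \<beta> E K k H" "simple_graph V E"
    and "real b \<le> \<beta>" "(1 - \<epsilon>) * \<beta> \<le> real b - 1"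
  shows "degree_bounded_subgraph \<beta> E H \<and> int k \<le> degree_potential V b H"
  using assms
proof (induction rule: true_rounds.induct)
  case (start \<epsilon> \<beta> E K)
  then show ?case
    by (simp add: degree_bounded_subgraph_def degree_potential_def vdeg_def)
next
  case (step \<epsilon> \<beta> E K k H H')
  then show ?case
    using round_exec_degree_potential[OF step.hyps(2) _ step.prems] by fastforce
qed

lemma exists_maximal_matching:
  assumes "finite H" "{} \<notin> H"
  shows "\<exists>M\<subseteq>H. matching M \<and> (\<forall>f\<in>H. f \<inter> \<Union>M \<noteq> {})"
  using assms
proof (induction H rule: finite_induct)
  case empty
  show ?case
    by (auto simp: matching_def)
next
  case (insert f H)
  then obtain M where M: "M \<subseteq> H" "matching M" "\<forall>g\<in>H. g \<inter> \<Union>M \<noteq> {}"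
    by auto
  show ?case
  proof (cases "f \<inter> \<Union>M = {}")
    case True
    then have "matching (insert f M)"
      using M(2) unfolding matching_def by blast
    then show ?thesis
      using M insert.prems by (intro exI[of _ "insert f M"]) auto
  next
    case False
    then show ?thesis
      using M by (intro exI[of _ M]) auto
  qed
qed

lemma card_le_max_matching:
  assumes "finite E" "M \<subseteq> E" "matching M"
  shows "card M \<le> max_matching E"
proof -
  have "finite {card M | M. M \<subseteq> E \<and> matching M}"
    using assms(1) by simp
  then show ?thesis
    unfolding max_matching_def using assms(2,3) by (intro Max_ge) auto
qed

lemma max_matching_pos:
  assumes "finite E" "E \<noteq> {}"
  shows "0 < max_matching E"
proof -
  obtain e where "e \<in> E"
    using assms(2) by blast
  then have "card {e} \<le> max_matching E"
    using card_le_max_matching[OF assms(1), of "{e}"] by (simp add: matching_def)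
  then show ?thesis
    by simp
qed

lemma card_le_sum_vdeg_of_cover:
  assumes "finite S" "\<forall>f\<in>H. f \<inter> S \<noteq> {}"
  shows "card H \<le> (\<Sum>v\<in>S. vdeg v H)"
proof -
  have "H = (\<Union>v\<in>S. {e \<in> H. v \<in> e})"
    using assms(2) by blast
  then have "card H = card (\<Union>v\<in>S. {e \<in> H. v \<in> e})"
    by simp
  also have "\<dots> \<le> (\<Sum>v\<in>S. vdeg v H)"
    unfolding vdeg_def by (rule card_UN_le[OF assms(1)])
  finally show ?thesis .
qed

lemma card_degree_bounded_subgraph:
  assumes "simple_graph V E" "degree_bounded_subgraph \<beta> E H" "0 \<le> \<beta>"
  shows "real (card H) \<le> 2 * \<beta> * real (max_matching E)"
proof -
  have "finite E" and HE: "H \<subseteq> E" and no_overfull: "\<forall>f\<in>H. \<not> overfull \<beta> H f"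
    using assms(1,2) simple_graph_finite_edges by (auto simp: degree_bounded_subgraph_def)
  have "finite H"
    using HE \<open>finite E\<close> by (rule finite_subset)
  have edge_card: "card f = 2" if "f \<in> H" for f
    using simple_graph_edgeD(1)[OF assms(1)] that HE by blast
  have edge_finite: "finite f" if "f \<in> H" for f
    using edge_card[OF that] by (intro card_ge_0_finite) simp
  have "{} \<notin> H"
    using edge_card by force
  then obtain M where M: "M \<subseteq> H" "matching M" "\<forall>f\<in>H. f \<inter> \<Union>M \<noteq> {}"
    using exists_maximal_matching[OF \<open>finite H\<close>] by blast
  have "finite M"
    using M(1) \<open>finite H\<close> finite_subset by blast
  then have "finite (\<Union>M)"
    using M(1) edge_finite by blast
  have vdeg_le: "real (vdeg v H) \<le> \<beta>" if v: "v \<in> \<Union>M" for v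
  proof -
    obtain f where f: "f \<in> M" "v \<in> f"
      using v by blast
    then have "f \<in> H"
      using M(1) by blast
    then have "vdeg v H \<le> edeg f H" and "\<not> overfull \<beta> H f"
      using vdeg_le_edeg[OF edge_finite f(2)] no_overfull by auto
    then show ?thesis
      unfolding overfull_def by linarith
  qed
  have "card (\<Union>M) \<le> 2 * max_matching E"
  proof -
    have "card (\<Union>M) \<le> sum card M"
      by (rule card_Union_le_sum_card)
    also have "\<dots> = 2 * card M"
      using M(1) edge_card by (simp add: subset_iff)
    also have "\<dots> \<le> 2 * max_matching E"
      using card_le_max_matching[OF \<open>finite E\<close> _ M(2)] M(1) HE by simp
    finally show ?thesis .
  qed
  have "real (card H) \<le> (\<Sum>v\<in>\<Union>M. real (vdeg v H))"
    using card_le_sum_vdeg_of_cover[OF \<open>finite (\<Union>M)\<close>] M(3) by (simp flip: of_nat_sum)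
  also have "\<dots> \<le> real (card (\<Union>M)) * \<beta>"
    using sum_bounded_above[of "\<Union>M" "\<lambda>v. real (vdeg v H)" \<beta>] vdeg_le by simp
  also have "\<dots> \<le> real (2 * max_matching E) * \<beta>"
    using \<open>card (\<Union>M) \<le> 2 * max_matching E\<close> assms(3) by (intro mult_right_mono) simp_all
  finally show ?thesis
    by (simp add: mult.commute mult.left_commute)
qed

lemma true_rounds_le_max_matching:
  assumes "true_rounds \<epsilon> \<beta> E K k H" "simple_graph V E" "0 < \<epsilon>" "2 \<le> \<epsilon> * \<beta>"
  shows "real k \<le> 4 * \<beta>\<^sup>2 * real (max_matching E)"
proof -
  have "0 < \<beta>"
    using assms(3,4) by (smt (verit) mult_nonneg_nonpos)
  define b where "b = nat \<lfloor>\<beta>\<rfloor>"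
  have "real b \<le> \<beta>" and "\<beta> < real b + 1"
    unfolding b_def using \<open>0 < \<beta>\<close> by linarith+
  then have "(1 - \<epsilon>) * \<beta> \<le> real b - 1"
    using assms(4) by (simp add: algebra_simps)
  then have H: "degree_bounded_subgraph \<beta> E H" and "int k \<le> degree_potential V b H"
    using true_rounds_degree_potential[OF assms(1,2) \<open>real b \<le> \<beta>\<close>] by auto
  then have "int k \<le> int (2 * b * card H)"
    using degree_potential_le[of V b H] by linarith
  then have "real k \<le> 2 * real b * real (card H)"
    by (metis of_nat_le_iff of_nat_mult of_nat_numeral)
  also have "\<dots> \<le> 2 * \<beta> * (2 * \<beta> * real (max_matching E))"
    using card_degree_bounded_subgraph[OF assms(2) H] \<open>real b \<le> \<beta>\<close> \<open>0 < \<beta>\<close>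
    by (intro mult_mono) auto
  finally show ?thesis
    by (simp add: power2_eq_square)
qed

lemma epsilon_beta_ge_two:
  fixes \<epsilon> \<beta> c :: real
  assumes "0 < \<epsilon>" "\<epsilon> < 1" "2 * \<epsilon> < c" "c / \<epsilon> ^ 3 \<le> \<beta>"
  shows "2 \<le> \<epsilon> * \<beta>" and "2 \<le> \<beta>"
proof -
  have "\<epsilon>\<^sup>2 \<le> \<epsilon>"
    using assms(1,2) by (simp add: power2_eq_square mult_le_cancel_left1)
  then have "2 \<le> c / \<epsilon>\<^sup>2"
    using assms(1,3) by (simp add: pos_le_divide_eq)
  also have "c / \<epsilon>\<^sup>2 = \<epsilon> * (c / \<epsilon> ^ 3)"
    using assms(1) by (simp add: field_simps power2_eq_square power3_eq_cube)
  also have "\<dots> \<le> \<epsilon> * \<beta>"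
    using assms(1,4) by (intro mult_left_mono) auto
  finally show "2 \<le> \<epsilon> * \<beta>" .
  then have "0 < \<beta>"
    using assms(1) by (smt (verit) mult_nonneg_nonpos)
  then have "\<epsilon> * \<beta> \<le> \<beta>"
    using assms(1,2) by (intro mult_left_le_one_le) auto
  then show "2 \<le> \<beta>"
    using \<open>2 \<le> \<epsilon> * \<beta>\<close> by linarith
qed

theorem lemma3p1:
  fixes c1 c2 :: real
  assumes "0 < c1" and "c1 \<le> c2"
  shows "\<exists>\<epsilon>0 > 0. \<exists>C > 0. \<forall>(\<epsilon>::real) (\<beta>::real) (V::nat set) (E::nat set set)
            (\<mu>s::real) (ms::real) (\<Delta>s::real) (\<gamma>::real) (k::nat) (H::nat set set).
     0 < \<epsilon> \<and> \<epsilon> < \<epsilon>0 \<and> c1 / \<epsilon> ^ 3 \<le> \<beta> \<and> \<beta> \<le> c2 / \<epsilon> ^ 3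
     \<and> simple_graph V E \<and> E \<noteq> {}
     \<and> real (max_matching E) / (2 + \<epsilon>) \<le> \<mu>s \<and> \<mu>s \<le> real (card V)
     \<and> avg_degree V E \<le> \<Delta>s \<and> \<Delta>s \<le> real (card V)
     \<and> real (card E) \<le> ms \<and> 0 < \<gamma> \<and> \<gamma> < 1
     \<and> true_rounds \<epsilon> \<beta> E (iters_per_round (card V) \<mu>s ms \<Delta>s \<gamma>) k H
     \<longrightarrow> real (k + 1) \<le> C * \<beta>\<^sup>2 * real (max_matching E)"
proof (rule exI[of _ "min 1 (c1 / 2)"], intro conjI exI[of _ "5 :: real"] allI impI)
  fix \<epsilon> \<beta> :: real and V :: "nat set" and E :: "nat set set" and \<mu>s ms \<Delta>s \<gamma> :: real
    and k :: nat and H :: "nat set set"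
  assume "0 < \<epsilon> \<and> \<epsilon> < min 1 (c1 / 2) \<and> c1 / \<epsilon> ^ 3 \<le> \<beta> \<and> \<beta> \<le> c2 / \<epsilon> ^ 3
     \<and> simple_graph V E \<and> E \<noteq> {}
     \<and> real (max_matching E) / (2 + \<epsilon>) \<le> \<mu>s \<and> \<mu>s \<le> real (card V)
     \<and> avg_degree V E \<le> \<Delta>s \<and> \<Delta>s \<le> real (card V)
     \<and> real (card E) \<le> ms \<and> 0 < \<gamma> \<and> \<gamma> < 1
     \<and> true_rounds \<epsilon> \<beta> E (iters_per_round (card V) \<mu>s ms \<Delta>s \<gamma>) k H"
  then have "0 < \<epsilon>" "\<epsilon> < 1" "2 * \<epsilon> < c1" "c1 / \<epsilon> ^ 3 \<le> \<beta>" "simple_graph V E" "E \<noteq> {}"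
    and rounds: "true_rounds \<epsilon> \<beta> E (iters_per_round (card V) \<mu>s ms \<Delta>s \<gamma>) k H"
    by auto
  have "2 \<le> \<epsilon> * \<beta>" and "2 \<le> \<beta>"
    using epsilon_beta_ge_two \<open>0 < \<epsilon>\<close> \<open>\<epsilon> < 1\<close> \<open>2 * \<epsilon> < c1\<close> \<open>c1 / \<epsilon> ^ 3 \<le> \<beta>\<close> by auto
  then have "1 \<le> \<beta>\<^sup>2"
    by (simp add: one_le_power)
  moreover have "1 \<le> real (max_matching E)"
    using max_matching_pos[OF simple_graph_finite_edges] \<open>simple_graph V E\<close> \<open>E \<noteq> {}\<close> by force
  ultimately have "1 \<le> \<beta>\<^sup>2 * real (max_matching E)"
    using mult_mono[of 1 "\<beta>\<^sup>2" 1 "real (max_matching E)"] by simp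
  then show "real (k + 1) \<le> 5 * \<beta>\<^sup>2 * real (max_matching E)"
    using true_rounds_le_max_matching[OF rounds \<open>simple_graph V E\<close> \<open>0 < \<epsilon>\<close> \<open>2 \<le> \<epsilon> * \<beta>\<close>] by simp
qed (use assms(1) in simp_all)

end
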